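(* Let $t\ge 1$ and $s\ge 3$ be integers with $s>(2^t+1)2^{t-1}$, and let $H_{t,s}=K_t\times C_s$. Then $H_{t,s}$ is $(t+1)$-regular, its edge connectivity is $t+1$, and $m(H_{t,s})\le 2^t$.
   Context: All graphs are finite and simple. $K_t$ is the complete graph on $t$ vertices and $C_s$ the cycle on $s$ vertices. The Cartesian product $H_1\times H_2$ of $H_1=(V_1,E_1)$ and $H_2=(V_2,E_2)$ has vertex set $V_1\times V_2$, with $(v_1,v_2)$ adjacent to $(u_1,u_2)$ iff either $v_1=u_1$ and $v_2u_2\in E_2$, or $v_2=u_2$ and $v_1u_1\in E_1$. The edge connectivity of a graph is the minimum number of edges whose removal disconnects it. For graphs $G_1=(V,E_1)$, $G_2=(V,E_2)$, their symmetric difference is $(V,E_1\oplus E_2)$. A connectivity code for $H=(V,E)$ is a collection of distinct spanning subgraphs $(V,E')$, $E'\subseteq E$, such that the symmetric difference of any two distinct members is a connected graph on $V$; $m(H)$ is the maximum cardinality of a connectivity code for $H$. *)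

theory Defs
  imports Main
begin

type_synonym 'a graph = "'a set \<times> 'a set set"

definition verts :: "'a graph \<Rightarrow> 'a set" where "verts G = fst G"
definition edges :: "'a graph \<Rightarrow> 'a set set" where "edges G = snd G"

definition simple_graph :: "'a graph \<Rightarrow> bool" where
  "simple_graph G \<longleftrightarrow> finite (verts G) \<and>
     (\<forall>e\<in>edges G. e \<subseteq> verts G \<and> card e = 2)"

definition complete_graph :: "nat \<Rightarrow> nat graph" where
  "complete_graph t = ({0..<t}, {{i, j} | i j. i < t \<and> j < t \<and> i \<noteq> j})"

text \<open>The cycle C_s on vertices 0,...,s-1 (meant for s \<ge> 3).\<close>
definition cycle_graph :: "nat \<Rightarrow> nat graph" where
  "cycle_graph s = ({0..<s}, {{i, (i + 1) mod s} | i. i < s})"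

definition cart_prod :: "'a graph \<Rightarrow> 'b graph \<Rightarrow> ('a \<times> 'b) graph" where
  "cart_prod G H = (verts G \<times> verts H,
     {{(v1, v2), (u1, u2)} | v1 v2 u1 u2.
        (v1 = u1 \<and> v1 \<in> verts G \<and> {v2, u2} \<in> edges H) \<or>
        (v2 = u2 \<and> v2 \<in> verts H \<and> {v1, u1} \<in> edges G)})"

definition degree :: "'a graph \<Rightarrow> 'a \<Rightarrow> nat" where
  "degree G v = card {e \<in> edges G. v \<in> e}"

definition regular :: "nat \<Rightarrow> 'a graph \<Rightarrow> bool" where
  "regular k G \<longleftrightarrow> (\<forall>v\<in>verts G. degree G v = k)"

definition adj_rel :: "'a set set \<Rightarrow> ('a \<times> 'a) set" where
  "adj_rel E = {(x, y). {x, y} \<in> E \<and> x \<noteq> y}"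

definition connected_graph :: "'a graph \<Rightarrow> bool" where
  "connected_graph G \<longleftrightarrow> verts G \<noteq> {} \<and>
     (\<forall>u\<in>verts G. \<forall>v\<in>verts G. (u, v) \<in> (adj_rel (edges G))\<^sup>*)"

definition edge_connectivity :: "'a graph \<Rightarrow> nat" where
  "edge_connectivity G =
     Min {card F | F. F \<subseteq> edges G \<and> \<not> connected_graph (verts G, edges G - F)}"

text \<open>A connectivity code: a collection of distinct spanning subgraphs (given by their
  edge sets) whose pairwise symmetric differences are connected graphs on V.\<close>
definition connectivity_code :: "'a graph \<Rightarrow> 'a set set set \<Rightarrow> bool" where
  "connectivity_code G C \<longleftrightarrow> (\<forall>E'\<in>C. E' \<subseteq> edges G) \<and>
     (\<forall>E1\<in>C. \<forall>E2\<in>C. E1 \<noteq> E2 \<longrightarrow>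
        connected_graph (verts G, (E1 - E2) \<union> (E2 - E1)))"

definition max_code :: "'a graph \<Rightarrow> nat" where
  "max_code G = Max {card C | C. connectivity_code G C}"

end

theory Submission
  imports Defs
begin

text \<open>A vertex (v, i) of K_t \<times> C_s lies on the clique of layer i and on the v-th copy of
  C_s, so it has degree (t - 1) + 2, and deleting these t + 1 edges isolates it. Conversely,
  delete at most t edges and call a copy of C_s light if it lost at most one edge. A light copy
  stays connected, two light copies are still joined by one of their s > t clique edges, and
  counting deleted edges shows that every vertex of a heavy copy keeps a clique edge to a light
  copy.

  For the code bound, suppose there were 2^t + 1 codewords. At each of the s positions i, the
  cycle edges leaving layer i form one of 2^t patterns, so two codewords agree there. Since s
  exceeds the number (2^t + 1) 2^(t-1) of pairs of codewords, one pair agrees at two positions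
  j < k; their symmetric difference then contains no cycle edge leaving layer j or layer k, so it
  does not connect the layers j + 1, ..., k to the rest.\<close>

section \<open>Graphs as pairs of vertex and edge sets\<close>

lemma verts_pair [simp]: "verts (V, E) = V"
  by (simp add: verts_def)

lemma edges_pair [simp]: "edges (V, E) = E"
  by (simp add: edges_def)

lemma finite_edges: "simple_graph G \<Longrightarrow> finite (edges G)"
  unfolding simple_graph_def by (meson Pow_iff finite_Pow_iff rev_finite_subset subsetI)

lemma degree_eq_card_neighbours:
  assumes "simple_graph G"
  shows "degree G v = card {u. {v, u} \<in> edges G}"
proof -
  have card_edge: "card e = 2" if "e \<in> edges G" for e
    using assms that by (simp add: simple_graph_def)
  have "{e \<in> edges G. v \<in> e} = (\<lambda>u. {v, u}) ` {u. {v, u} \<in> edges G}"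
  proof (intro equalityI subsetI)
    fix e assume "e \<in> {e \<in> edges G. v \<in> e}"
    then obtain u where "e = {v, u}"
      using card_edge by (auto simp: card_2_iff)
    with \<open>e \<in> {e \<in> edges G. v \<in> e}\<close> show "e \<in> (\<lambda>u. {v, u}) ` {u. {v, u} \<in> edges G}"
      by auto
  qed auto
  moreover have "inj_on (\<lambda>u. {v, u}) {u. {v, u} \<in> edges G}"
  proof (rule inj_onI)
    fix u u' assume "u \<in> {u. {v, u} \<in> edges G}" "{v, u} = {v, u'}"
    moreover have "u \<noteq> v"
      using card_edge \<open>u \<in> {u. {v, u} \<in> edges G}\<close> by fastforce
    ultimately show "u = u'"
      by (auto simp: doubleton_eq_iff)
  qed
  ultimately show ?thesis
    by (simp add: degree_def card_image)
qed

lemma sym_adj_rel: "sym (adj_rel E)"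
  by (auto simp: adj_rel_def sym_def insert_commute)

lemma adj_relI: "{x, y} \<in> E \<Longrightarrow> x \<noteq> y \<Longrightarrow> (x, y) \<in> adj_rel E"
  by (simp add: adj_rel_def)

lemma connected_graphI:
  assumes "V \<noteq> {}" and reach: "\<And>x. x \<in> V \<Longrightarrow> (x, w) \<in> (adj_rel E)\<^sup>*"
  shows "connected_graph (V, E)"
  unfolding connected_graph_def verts_pair edges_pair
proof (intro conjI ballI)
  fix x y assume "x \<in> V" "y \<in> V"
  then have "(x, w) \<in> (adj_rel E)\<^sup>*" "(w, y) \<in> (adj_rel E)\<^sup>*"
    using reach sym_rtrancl[OF sym_adj_rel] by (auto intro: symD)
  then show "(x, y) \<in> (adj_rel E)\<^sup>*"
    by simp
qed (use assms in simp)

lemma not_connected_if_closed: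
  assumes closed: "\<And>x y. (x, y) \<in> adj_rel E \<Longrightarrow> x \<in> S \<Longrightarrow> y \<in> S"
    and "x \<in> S" "x \<in> V" "y \<in> V" "y \<notin> S"
  shows "\<not> connected_graph (V, E)"
proof
  assume "connected_graph (V, E)"
  then have "(x, y) \<in> (adj_rel E)\<^sup>*"
    using assms by (simp add: connected_graph_def)
  then have "y \<in> S"
    using \<open>x \<in> S\<close> by induction (auto intro: closed)
  with \<open>y \<notin> S\<close> show False ..
qed

lemma rtrancl_around_cycle:
  fixes f :: "nat \<Rightarrow> 'a"
  assumes "sym R" "k < s" and step: "\<And>m. m < s \<Longrightarrow> m \<noteq> k \<Longrightarrow> (f m, f (Suc m mod s)) \<in> R"
    and "i < s" "j < s"
  shows "(f i, f j) \<in> R\<^sup>*"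
proof -
  have walk: "(f (Suc k mod s), f ((Suc k + n) mod s)) \<in> R\<^sup>*" if "n < s" for n
    using that
  proof (induction n)
    case (Suc n)
    have "(Suc k + n) mod s \<noteq> k"
      using Suc.prems \<open>k < s\<close> by (auto simp: mod_if)
    then have "(f ((Suc k + n) mod s), f ((Suc k + Suc n) mod s)) \<in> R"
      using step[of "(Suc k + n) mod s"] \<open>k < s\<close> by (simp add: mod_Suc_eq)
    with Suc show ?case
      by (meson Suc_lessD rtrancl.rtrancl_into_rtrancl)
  qed simp
  have from_start: "(f (Suc k mod s), f j) \<in> R\<^sup>*" if "j < s" for j
  proof -
    have "(Suc k + (j + s - Suc k) mod s) mod s = j"
      using that \<open>k < s\<close> by (subst mod_add_right_eq) simp
    then show ?thesis
      using walk[of "(j + s - Suc k) mod s"] \<open>k < s\<close> by simp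
  qed
  show ?thesis
    using from_start[OF \<open>i < s\<close>] from_start[OF \<open>j < s\<close>] sym_rtrancl[OF \<open>sym R\<close>]
    by (meson rtrancl_trans symD)
qed

lemma two_maps_agree_on_same_pair:
  fixes f :: "nat \<Rightarrow> 'a \<Rightarrow> 'b"
  assumes "finite X" "finite Y" "card Y < card X" "\<And>j x. x \<in> X \<Longrightarrow> f j x \<in> Y"
    and "card X choose 2 < s"
  shows "\<exists>j k x y. j < k \<and> k < s \<and> x \<in> X \<and> y \<in> X \<and> x \<noteq> y \<and>
    f j x = f j y \<and> f k x = f k y"
proof -
  let ?pairs = "{A. A \<subseteq> X \<and> card A = 2}"
  have "\<exists>A. A \<in> ?pairs \<and> (\<forall>x\<in>A. \<forall>y\<in>A. f j x = f j y)" for j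
  proof -
    have "\<not> inj_on (f j) X"
    proof
      assume "inj_on (f j) X"
      then have "card X \<le> card Y"
        using assms(2,4) by (intro card_inj_on_le) auto
      with assms(3) show False
        by simp
    qed
    then obtain x y where "x \<in> X" "y \<in> X" "x \<noteq> y" "f j x = f j y"
      unfolding inj_on_def by blast
    then show ?thesis
      by (intro exI[of _ "{x, y}"]) auto
  qed
  then obtain p where p: "\<And>j. p j \<in> ?pairs" "\<And>j. \<forall>x\<in>p j. \<forall>y\<in>p j. f j x = f j y"
    by metis
  have "\<not> inj_on p {0..<s}"
  proof
    assume "inj_on p {0..<s}"
    then have "card {0..<s} \<le> card ?pairs"
      using p(1) assms(1) by (intro card_inj_on_le) auto
    with assms(1,5) show False
      by (simp add: n_subsets)
  qed
  then obtain j k where jk: "j < k" "k < s" "p j = p k"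
    unfolding inj_on_def by (metis atLeastLessThan_iff linorder_neqE_nat)
  obtain x y where xy: "p j = {x, y}" "x \<noteq> y"
    using p(1)[of j] by (auto simp: card_2_iff)
  have "x \<in> p k" "y \<in> p k"
    using xy(1) jk(3) by auto
  then have "x \<in> X" "y \<in> X" "f j x = f j y" "f k x = f k y"
    using p(1)[of k] p(2)[of j] p(2)[of k] jk(3) by blast+
  with jk(1,2) xy(2) show ?thesis
    by blast
qed

section \<open>The product of a clique and a cycle\<close>

abbreviation clique_cycle :: "nat \<Rightarrow> nat \<Rightarrow> (nat \<times> nat) graph" where
  "clique_cycle t s \<equiv> cart_prod (complete_graph t) (cycle_graph s)"

abbreviation cycle_edge :: "nat \<Rightarrow> nat \<Rightarrow> nat \<Rightarrow> (nat \<times> nat) set" where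
  "cycle_edge s v i \<equiv> {(v, i), (v, Suc i mod s)}"

lemma verts_clique_cycle: "verts (clique_cycle t s) = {0..<t} \<times> {0..<s}"
  by (simp add: cart_prod_def complete_graph_def cycle_graph_def)

lemma edges_clique_cycle_iff:
  "e \<in> edges (clique_cycle t s) \<longleftrightarrow>
    (\<exists>v i. v < t \<and> i < s \<and> e = cycle_edge s v i) \<or>
    (\<exists>a b i. a < t \<and> b < t \<and> a \<noteq> b \<and> i < s \<and> e = {(a, i), (b, i)})"
  unfolding cart_prod_def complete_graph_def cycle_graph_def
  by (auto simp: doubleton_eq_iff) blast+

lemma Suc_mod_eq_iff:
  fixes i m s :: nat
  assumes "i < s" "m < s"
  shows "i = Suc m mod s \<longleftrightarrow> m = (i + s - 1) mod s"
  using assms by (cases "i = 0"; cases "Suc m = s") (auto simp: mod_if)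

lemma cycle_edge_eq_iff:
  assumes "s \<ge> 3" "i < s" "j < s"
  shows "cycle_edge s v i = cycle_edge s w j \<longleftrightarrow> v = w \<and> i = j"
  using assms by (auto simp: doubleton_eq_iff mod_if split: if_splits)

lemma simple_graph_clique_cycle:
  assumes "s \<ge> 2"
  shows "simple_graph (clique_cycle t s)"
  using assms by (auto simp: simple_graph_def verts_clique_cycle edges_clique_cycle_iff mod_if)

lemma neighbours_clique_cycle:
  assumes "v < t" "i < s"
  shows "{u. {(v, i), u} \<in> edges (clique_cycle t s)} =
    {(v, Suc i mod s), (v, (i + s - 1) mod s)} \<union> (\<lambda>b. (b, i)) ` ({0..<t} - {v})"
proof -
  have "i = Suc ((i + s - 1) mod s) mod s"
    using Suc_mod_eq_iff[OF \<open>i < s\<close>, of "(i + s - 1) mod s"] assms by simp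
  then show ?thesis
    using assms Suc_mod_eq_iff[OF \<open>i < s\<close>] unfolding edges_clique_cycle_iff
    by (auto simp: doubleton_eq_iff) (metis mod_less_divisor neq0_conv not_less0)
qed

lemma degree_clique_cycle:
  assumes "v < t" "i < s" "s \<ge> 3"
  shows "degree (clique_cycle t s) (v, i) = t + 1"
proof -
  let ?A = "{(v, Suc i mod s), (v, (i + s - 1) mod s)}"
  let ?B = "(\<lambda>b. (b, i)) ` ({0..<t} - {v})"
  have "card ?A = 2"
    using assms by (auto simp: mod_if)
  moreover have "card ?B = t - 1"
    using assms by (subst card_image) (auto simp: inj_on_def)
  moreover have "card (?A \<union> ?B) = card ?A + card ?B"
    by (rule card_Un_disjoint) auto
  ultimately show ?thesis
    using assms simple_graph_clique_cycle[of s t]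
    by (simp add: degree_eq_card_neighbours neighbours_clique_cycle)
qed

lemma regular_clique_cycle: "s \<ge> 3 \<Longrightarrow> regular (t + 1) (clique_cycle t s)"
  by (auto simp: regular_def verts_clique_cycle degree_clique_cycle)

section \<open>Edge connectivity\<close>

text \<open>The copy v of C_s is called light when at most one of its edges lies in F.\<close>

definition cycle_cuts :: "nat \<Rightarrow> (nat \<times> nat) set set \<Rightarrow> nat \<Rightarrow> nat set" where
  "cycle_cuts s F v = {m. m < s \<and> cycle_edge s v m \<in> F}"

lemma finite_cycle_cuts [simp]: "finite (cycle_cuts s F v)"
  by (simp add: cycle_cuts_def)

lemma connected_cycle_copy:
  assumes "card (cycle_cuts s F v) \<le> 1" "s \<ge> 2" "v < t" "i < s" "j < s"
  shows "((v, i), (v, j)) \<in> (adj_rel (edges (clique_cycle t s) - F))\<^sup>*"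
proof -
  obtain k where "k < s" and uncut: "\<And>m. m < s \<Longrightarrow> m \<noteq> k \<Longrightarrow> cycle_edge s v m \<notin> F"
  proof (cases "cycle_cuts s F v = {}")
    case True
    then show ?thesis
      using that[of 0] \<open>s \<ge> 2\<close> by (auto simp: cycle_cuts_def)
  next
    case False
    then obtain k where "k \<in> cycle_cuts s F v"
      by blast
    with assms(1) show ?thesis
      using that[of k] by (auto simp: card_le_Suc0_iff_eq cycle_cuts_def)
  qed
  have "((\<lambda>m. (v, m)) i, (\<lambda>m. (v, m)) j) \<in> (adj_rel (edges (clique_cycle t s) - F))\<^sup>*"
  proof (rule rtrancl_around_cycle[OF sym_adj_rel \<open>k < s\<close> _ \<open>i < s\<close> \<open>j < s\<close>])
    fix m assume "m < s" "m \<noteq> k"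
    then have "cycle_edge s v m \<in> edges (clique_cycle t s) - F"
      using uncut \<open>v < t\<close> by (auto simp: edges_clique_cycle_iff)
    moreover have "Suc m mod s \<noteq> m"
      using \<open>m < s\<close> \<open>s \<ge> 2\<close> by (simp add: mod_if)
    ultimately show "((\<lambda>m. (v, m)) m, (\<lambda>m. (v, m)) (Suc m mod s)) \<in> adj_rel (edges (clique_cycle t s) - F)"
      by (simp add: adj_relI)
  qed
  then show ?thesis
    by simp
qed

lemma clique_edge_survives:
  assumes "finite F" "card F < s" "c \<noteq> d"
  shows "\<exists>j<s. {(c, j), (d, j)} \<notin> F"
proof (rule ccontr)
  assume "\<not> ?thesis"
  then have "(\<lambda>j. {(c, j), (d, j)}) ` {0..<s} \<subseteq> F"
    by auto
  moreover have "inj_on (\<lambda>j. {(c, j), (d, j)}) {0..<s}"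
    using \<open>c \<noteq> d\<close> by (auto simp: inj_on_def doubleton_eq_iff)
  ultimately have "s \<le> card F"
    using card_inj_on_le[OF _ _ \<open>finite F\<close>] by fastforce
  with \<open>card F < s\<close> show False
    by simp
qed

lemma clique_edge_in_adj_rel:
  assumes "c < t" "d < t" "c \<noteq> d" "j < s" "{(c, j), (d, j)} \<notin> F"
  shows "((c, j), (d, j)) \<in> adj_rel (edges (clique_cycle t s) - F)"
proof (rule adj_relI)
  have "{(c, j), (d, j)} \<in> edges (clique_cycle t s)"
    unfolding edges_clique_cycle_iff using assms by blast
  with assms show "{(c, j), (d, j)} \<in> edges (clique_cycle t s) - F"
    by blast
qed (use assms in simp)

lemma escape_to_light_copy:
  assumes "finite F" "card F \<le> t" "s \<ge> 3" "v < t" "i < s" "card (cycle_cuts s F v) \<ge> 2"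
  shows "\<exists>c<t. card (cycle_cuts s F c) \<le> 1 \<and> {(v, i), (c, i)} \<notin> F"
proof (rule ccontr)
  assume blocked: "\<not> ?thesis"
  have "\<not> card (cycle_cuts s F v) \<le> Suc 0"
    using assms(6) by simp
  then obtain m1 m2 where m12: "m1 \<in> cycle_cuts s F v" "m2 \<in> cycle_cuts s F v" "m1 \<noteq> m2"
    by (auto simp: card_le_Suc0_iff_eq)
  txt \<open>Each c \<le> t owns a deleted edge, copy v owning two of them (the second one under the
    name t), so more than t edges are deleted.\<close>
  define owner where "owner e = (if e = cycle_edge s v m2 then t
      else if fst ` e = {v} then v else the_elem (fst ` e - {v}))" for e
  have "{..t} \<subseteq> owner ` F"
  proof
    fix n assume "n \<in> {..t}"
    then consider "n = t" | "n = v" | "n < t" "n \<noteq> v" "cycle_cuts s F n = {}"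
      | m where "n < t" "n \<noteq> v" "m \<in> cycle_cuts s F n"
      using assms(4) by fastforce
    then show "n \<in> owner ` F"
    proof cases
      case 1
      with m12(2) show ?thesis
        by (auto simp: owner_def cycle_cuts_def)
    next
      case 2
      have "cycle_edge s v m1 \<noteq> cycle_edge s v m2"
        using m12 \<open>s \<ge> 3\<close> by (simp add: cycle_cuts_def cycle_edge_eq_iff)
      with 2 m12(1) show ?thesis
        by (intro rev_image_eqI[of "cycle_edge s v m1"]) (auto simp: owner_def cycle_cuts_def)
    next
      case 3
      then have "{(v, i), (n, i)} \<in> F"
        using blocked by auto
      with 3 show ?thesis
        by (intro rev_image_eqI[of "{(v, i), (n, i)}"]) (auto simp: owner_def)
    next
      case (4 m)
      then show ?thesis
        by (intro rev_image_eqI[of "cycle_edge s n m"]) (auto simp: owner_def cycle_cuts_def)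
    qed
  qed
  then have "t + 1 \<le> card F"
    using card_mono[OF finite_imageI[OF \<open>finite F\<close>]] card_image_le[OF \<open>finite F\<close>, of owner]
    by fastforce
  with \<open>card F \<le> t\<close> show False
    by simp
qed

lemma connected_light_copies:
  assumes "finite F" "card F < s" "s \<ge> 2" "v < t" "c < t" "i < s" "j < s"
    and "card (cycle_cuts s F v) \<le> 1" "card (cycle_cuts s F c) \<le> 1"
  shows "((v, i), (c, j)) \<in> (adj_rel (edges (clique_cycle t s) - F))\<^sup>*"
proof (cases "v = c")
  case True
  with assms show ?thesis
    by (simp add: connected_cycle_copy)
next
  case False
  then obtain m where "m < s" "{(v, m), (c, m)} \<notin> F"
    using clique_edge_survives[OF \<open>finite F\<close> \<open>card F < s\<close>] by blast
  with assms False
  have "((v, i), (v, m)) \<in> (adj_rel (edges (clique_cycle t s) - F))\<^sup>*"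
    "((v, m), (c, m)) \<in> adj_rel (edges (clique_cycle t s) - F)"
    "((c, m), (c, j)) \<in> (adj_rel (edges (clique_cycle t s) - F))\<^sup>*"
    by (simp_all add: connected_cycle_copy clique_edge_in_adj_rel)
  then show ?thesis
    by (meson rtrancl_into_rtrancl rtrancl_trans)
qed

lemma connected_clique_cycle_minus_few_edges:
  assumes "t \<ge> 1" "s \<ge> 3" "t < s" "F \<subseteq> edges (clique_cycle t s)" "card F \<le> t"
  shows "connected_graph (verts (clique_cycle t s), edges (clique_cycle t s) - F)"
proof -
  let ?R = "adj_rel (edges (clique_cycle t s) - F)"
  have "finite F"
    using finite_edges[OF simple_graph_clique_cycle[of s t]] assms(2,4) finite_subset by auto
  have "card F < s"
    using assms(3,5) by simp
  obtain c0 where c0: "c0 < t" "card (cycle_cuts s F c0) \<le> 1"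
    using escape_to_light_copy[OF \<open>finite F\<close> \<open>card F \<le> t\<close> \<open>s \<ge> 3\<close>, of 0 0] assms(1,2)
    by (cases "card (cycle_cuts s F 0) \<le> 1") (auto simp: not_le)
  show ?thesis
  proof (rule connected_graphI)
    show "verts (clique_cycle t s) \<noteq> {}"
      using assms(1,2) by (simp add: verts_clique_cycle)
  next
    fix x assume "x \<in> verts (clique_cycle t s)"
    then obtain v i where x: "x = (v, i)" "v < t" "i < s"
      by (auto simp: verts_clique_cycle)
    show "(x, (c0, 0)) \<in> ?R\<^sup>*"
    proof (cases "card (cycle_cuts s F v) \<le> 1")
      case True
      with x c0 \<open>finite F\<close> \<open>card F < s\<close> \<open>s \<ge> 3\<close> show ?thesis
        by (simp add: connected_light_copies)
    next
      case False
      then obtain c where c: "c < t" "card (cycle_cuts s F c) \<le> 1" "{(v, i), (c, i)} \<notin> F"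
        using escape_to_light_copy[OF \<open>finite F\<close> \<open>card F \<le> t\<close> \<open>s \<ge> 3\<close> x(2,3)] by auto
      then have "c \<noteq> v"
        using False by auto
      with c x have "((v, i), (c, i)) \<in> ?R"
        by (simp add: clique_edge_in_adj_rel)
      moreover have "((c, i), (c0, 0)) \<in> ?R\<^sup>*"
        using c c0 x \<open>finite F\<close> \<open>card F < s\<close> \<open>s \<ge> 3\<close> by (simp add: connected_light_copies)
      ultimately show ?thesis
        using x(1) by (meson converse_rtrancl_into_rtrancl)
    qed
  qed
qed

lemma edge_connectivity_clique_cycle:
  assumes "t \<ge> 1" "s \<ge> 3" "t < s"
  shows "edge_connectivity (clique_cycle t s) = t + 1"
proof -
  let ?E = "edges (clique_cycle t s)" and ?V = "verts (clique_cycle t s)"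
  let ?cuts = "{card F | F. F \<subseteq> ?E \<and> \<not> connected_graph (?V, ?E - F)}"
  define star where "star = {e \<in> ?E. (0, 0) \<in> e}"
  have "card star = t + 1"
    using degree_clique_cycle[of 0 t 0 s] assms by (simp add: star_def degree_def)
  moreover have "\<not> connected_graph (?V, ?E - star)"
    using assms
    by (intro not_connected_if_closed[where S = "{(0, 0)}" and x = "(0, 0)" and y = "(0, 1)"])
      (auto simp: star_def adj_rel_def verts_clique_cycle)
  moreover have "star \<subseteq> ?E"
    by (simp add: star_def)
  ultimately have "t + 1 \<in> ?cuts"
    by (metis (mono_tags, lifting) mem_Collect_eq)
  moreover have "finite ?cuts"
  proof (rule finite_subset)
    show "?cuts \<subseteq> card ` Pow ?E"
      by blast
    show "finite (card ` Pow ?E)"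
      using finite_edges[OF simple_graph_clique_cycle] \<open>s \<ge> 3\<close> by simp
  qed
  moreover have "t + 1 \<le> n" if "n \<in> ?cuts" for n
  proof -
    obtain F where "n = card F" "F \<subseteq> ?E" "\<not> connected_graph (?V, ?E - F)"
      using \<open>n \<in> ?cuts\<close> by blast
    with connected_clique_cycle_minus_few_edges[OF assms] show ?thesis
      by (metis Suc_eq_plus1 not_less_eq_eq)
  qed
  ultimately show ?thesis
    unfolding edge_connectivity_def edges_pair verts_pair by (intro Min_eqI)
qed

section \<open>Connectivity codes\<close>

lemma not_connected_without_two_cycle_positions:
  assumes "t \<ge> 1" "D \<subseteq> edges (clique_cycle t s)" "j < k" "k < s"
    and "\<And>v. v < t \<Longrightarrow> cycle_edge s v j \<notin> D" "\<And>v. v < t \<Longrightarrow> cycle_edge s v k \<notin> D"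
  shows "\<not> connected_graph (verts (clique_cycle t s), D)"
proof (rule not_connected_if_closed[where S = "{x. j < snd x \<and> snd x \<le> k}"
      and x = "(0, Suc j)" and y = "(0, j)"])
  fix x y assume "(x, y) \<in> adj_rel D" and x: "x \<in> {x. j < snd x \<and> snd x \<le> k}"
  then have xy: "{x, y} \<in> D" "x \<noteq> y"
    by (simp_all add: adj_rel_def)
  then have "{x, y} \<in> edges (clique_cycle t s)"
    using assms(2) by blast
  then consider v m where "v < t" "m < s" "{x, y} = cycle_edge s v m"
    | a b m where "{x, y} = {(a, m), (b, m)}"
    unfolding edges_clique_cycle_iff by blast
  then show "y \<in> {x. j < snd x \<and> snd x \<le> k}"
  proof cases
    case (1 v m)
    then have "m \<noteq> j" "m \<noteq> k"
      using assms(5,6) xy(1) by auto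
    with 1 x xy(2) assms(3,4) show ?thesis
      by (auto simp: doubleton_eq_iff mod_if split: if_splits)
  next
    case 2
    with x show ?thesis
      by (auto simp: doubleton_eq_iff)
  qed
qed (use assms in \<open>auto simp: verts_clique_cycle\<close>)

lemma card_connectivity_code_clique_cycle:
  assumes "t \<ge> 1" "s > (2 ^ t + 1) * 2 ^ (t - 1)" "connectivity_code (clique_cycle t s) C"
  shows "card C \<le> 2 ^ t"
proof (rule ccontr)
  assume "\<not> ?thesis"
  then have "2 ^ t + 1 \<le> card C"
    by simp
  then obtain C' where "C' \<subseteq> C" "card C' = 2 ^ t + 1"
    by (meson obtain_subset_with_card_n)
  then have "finite C'"
    by (simp add: card_ge_0_finite)
  have "(2 ^ t + 1) choose 2 = (2 ^ t + 1) * 2 ^ (t - 1)"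
    using \<open>t \<ge> 1\<close> by (cases t) (simp_all add: choose_two)
  define pattern where "pattern j E = {v \<in> {0..<t}. cycle_edge s v j \<in> E}" for j E
  have "pattern j E \<in> Pow {0..<t}" for j E
    by (auto simp: pattern_def)
  moreover have "card (Pow {0..<t}) < card C'" "card C' choose 2 < s"
    using \<open>card C' = 2 ^ t + 1\<close> \<open>_ choose 2 = _\<close> assms(2) by (simp_all add: card_Pow)
  ultimately obtain j k E1 E2 where "j < k" "k < s" "E1 \<in> C'" "E2 \<in> C'" "E1 \<noteq> E2"
    and agree: "pattern j E1 = pattern j E2" "pattern k E1 = pattern k E2"
    using two_maps_agree_on_same_pair[of C' "Pow {0..<t}" pattern s] \<open>finite C'\<close> by blast
  then have "E1 \<in> C" "E2 \<in> C"
    using \<open>C' \<subseteq> C\<close> by auto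
  then have "connected_graph (verts (clique_cycle t s), (E1 - E2) \<union> (E2 - E1))"
    and "(E1 - E2) \<union> (E2 - E1) \<subseteq> edges (clique_cycle t s)"
    using assms(3) \<open>E1 \<noteq> E2\<close> by (auto simp: connectivity_code_def)
  moreover have "\<not> connected_graph (verts (clique_cycle t s), (E1 - E2) \<union> (E2 - E1))"
    using \<open>t \<ge> 1\<close> calculation(2) \<open>j < k\<close> \<open>k < s\<close>
  proof (rule not_connected_without_two_cycle_positions)
    fix v assume "v < t"
    with agree show "cycle_edge s v j \<notin> (E1 - E2) \<union> (E2 - E1)"
      "cycle_edge s v k \<notin> (E1 - E2) \<union> (E2 - E1)"
      by (auto simp: pattern_def set_eq_iff)
  qed
  ultimately show False
    by simp
qed

lemma max_code_clique_cycle: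
  assumes "t \<ge> 1" "s > (2 ^ t + 1) * 2 ^ (t - 1)"
  shows "max_code (clique_cycle t s) \<le> 2 ^ t"
proof -
  let ?sizes = "{card C | C. connectivity_code (clique_cycle t s) C}"
  have "connectivity_code (clique_cycle t s) {}"
    by (simp add: connectivity_code_def)
  then have "0 \<in> ?sizes"
    by force
  moreover have "?sizes \<subseteq> {..2 ^ t}"
    using card_connectivity_code_clique_cycle[OF assms] by auto
  ultimately show ?thesis
    unfolding max_code_def using Max_in[OF finite_subset[OF _ finite_atMost]] by blast
qed

theorem proposition3p2:
  fixes t s :: nat
  assumes "t \<ge> 1" and "s \<ge> 3" and "s > (2 ^ t + 1) * 2 ^ (t - 1)"
  shows "regular (t + 1) (cart_prod (complete_graph t) (cycle_graph s)) \<and>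
         edge_connectivity (cart_prod (complete_graph t) (cycle_graph s)) = t + 1 \<and>
         max_code (cart_prod (complete_graph t) (cycle_graph s)) \<le> 2 ^ t"
proof -
  have "t < 2 ^ t"
    by (rule less_exp)
  also have "\<dots> < (2 ^ t + 1) * 2 ^ (t - 1)"
    using mult_le_mono2[of 1 "2 ^ (t - 1)" "2 ^ t + 1"] by simp
  finally have "t < s"
    using assms(3) by linarith
  then show ?thesis
    using regular_clique_cycle[OF assms(2)] edge_connectivity_clique_cycle[OF assms(1,2)]
      max_code_clique_cycle[OF assms(1,3)] by blast
qed

end
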